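(* Consider Algorithm PDS-SPP described in the context (with an arbitrary vector $v_k$ used in the $x$-update). Suppose that $$\alpha_k^t=1,\quad\|\mathcal A\|^2\le\eta_k^{t-1}q_k^t\quad\text{for all }t\ge2,\ k\ge1,$$ $$\beta_kT_{k-1}\alpha_k^1=\beta_{k-1}T_k,\quad\alpha_k^1\|\mathcal A\|^2\le\eta_{k-1}^{T_{k-1}}q_k^1\quad\text{for all }k\ge2.$$ Let $$B=\sum_{k=1}^N\frac{\beta_k}{T_k}\sum_{t=1}^{T_k}\big[\langle\mathcal A^\top z_k^t-\mathcal A^\top z,x_k^t-\tilde u_k^t\rangle+q_k^tU(z_k^{t-1},z_k^t)+\eta_k^tV(x_k^{t-1},x_k^t)\big].$$ Then for every $z\in\mathcal Z$, $$B\ge-\frac{\beta_N}{T_N}\|\mathcal A\|\,|z_N-z|\,\|x_N-x_N^{T_N-1}\|+\frac{\beta_N\eta_N^{T_N}}{2T_N}\|x_N^{T_N-1}-x_N^{T_N}\|^2.$$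
   Context: Setting. $\mathcal X$ closed convex subset of a finite-dimensional space with norm $\|\cdot\|$; $\mathcal Z$ closed convex subset of a finite-dimensional space with norm $|\cdot|$; $\mathcal A$ linear with $\|\mathcal A\|:=\sup\{\langle\mathcal Ax,z\rangle:\|x\|\le1,|z|\le1\}$; $h$ convex on $\mathcal Z$; $\mu\ge0$; $\nu$ $1$-strongly convex on $\mathcal X$ w.r.t. $\|\cdot\|$; $\zeta$ $1$-strongly convex on $\mathcal Z$ w.r.t. $|\cdot|$; $U(\hat z,z)=\zeta(z)-\zeta(\hat z)-\langle\zeta'(\hat z),z-\hat z\rangle$, $V(\hat x,x)=\nu(x)-\nu(\hat x)-\langle\nu'(\hat x),x-\hat x\rangle$. Algorithm: $x_0\in\mathcal X$, $z_0\in\mathcal Z$; for $k=1,\dots,N$, with some vector $v_k$ and positive integer $T_k$: $x_k^0=x_{k-1}$, $z_k^0=z_{k-1}$, $x_k^{-1}=x_{k-1}^{T_{k-1}-1}$ ($x_1^{-1}=x_0$); for $t=1,\dots,T_k$: $\tilde u_k^t=x_k^{t-1}+\alpha_k^t(x_k^{t-1}-x_k^{t-2})$, $z_k^t=\arg\min_{z\in\mathcal Z}h(z)+\langle-\mathcal A\tilde u_k^t,z\rangle+q_k^tU(z_k^{t-1},z)$, $x_k^t=\arg\min_{x\in\mathcal X}\mu\nu(x)+\langle v_k+\mathcal A^\top z_k^t,x\rangle+\eta_k^tV(x_k^{t-1},x)+p_kV(x_{k-1},x)$; $x_k=x_k^{T_k}$, $z_k=z_k^{T_k}$. Parameters: positive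 $\beta_k,q_k^t,\eta_k^t,p_k$, nonnegative $\alpha_k^t$. *)

theory Defs
  imports "HOL-Analysis.Analysis"
begin

definition is_norm :: "('a::real_vector \<Rightarrow> real) \<Rightarrow> bool" where
  "is_norm n \<longleftrightarrow> (\<forall>x. 0 \<le> n x) \<and> (\<forall>x. n x = 0 \<longleftrightarrow> x = 0)
     \<and> (\<forall>c x. n (c *\<^sub>R x) = \<bar>c\<bar> * n x) \<and> (\<forall>x y. n (x + y) \<le> n x + n y)"

definition op_norm :: "('a::real_inner \<Rightarrow> 'b::real_inner) \<Rightarrow> ('a \<Rightarrow> real) \<Rightarrow> ('b \<Rightarrow> real) \<Rightarrow> real" where
  "op_norm A nx nz = Sup {inner (A x) z | x z. nx x \<le> 1 \<and> nz z \<le> 1}"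

definition strongly_convex_wrt :: "('a::real_vector \<Rightarrow> real) \<Rightarrow> 'a set \<Rightarrow> ('a \<Rightarrow> real) \<Rightarrow> bool" where
  "strongly_convex_wrt n S f \<longleftrightarrow> (\<forall>x\<in>S. \<forall>y\<in>S. \<forall>l::real. 0 \<le> l \<and> l \<le> 1 \<longrightarrow>
      f ((1 - l) *\<^sub>R x + l *\<^sub>R y) \<le> (1 - l) * f x + l * f y - (1/2) * l * (1 - l) * (n (x - y))\<^sup>2)"

definition bregman :: "('a::real_inner \<Rightarrow> real) \<Rightarrow> ('a \<Rightarrow> 'a) \<Rightarrow> 'a \<Rightarrow> 'a \<Rightarrow> real" where
  "bregman f f' xh x = f x - f xh - inner (f' xh) (x - xh)"

end

theory Submission
  imports Defs
begin

text \<open>Let D_k^t = x_k^t - x_k^(t-1) be the primal steps and P_k^t = <A D_k^t, z_k^t - z>.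
  Since x_k^t - u_k^t = D_k^t - alpha_k^t D_k^(t-1), each summand of B is at least
  P_k^t - alpha_k^t P_k^(t-1) + eta_k^t/2 |D_k^t|^2 - (alpha_k^t)^2 ||A||^2/(2 q_k^t) |D_k^(t-1)|^2:
  the Bregman distances dominate half squared norms by strong convexity, and the cross term
  <A D_k^(t-1), z_k^t - z_k^(t-1)> is paid for by the dual one via Young's inequality.
  The step-size conditions make these bounds telescope within each block, and the condition on
  beta_k makes the weighted block sums telescope across blocks.  What survives is
  beta_N/T_N (P_N^T_N + eta_N^T_N/2 |D_N^T_N|^2), and P_N^T_N is bounded below by the
  operator norm.\<close>

lemma is_norm_nonneg: "is_norm n \<Longrightarrow> 0 \<le> n x"
  unfolding is_norm_def by blast

lemma is_norm_eq_0_iff: "is_norm n \<Longrightarrow> n x = 0 \<longleftrightarrow> x = 0"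
  unfolding is_norm_def by blast

lemma is_norm_zero: "is_norm n \<Longrightarrow> n 0 = 0"
  using is_norm_eq_0_iff by blast

lemma is_norm_scaleR: "is_norm n \<Longrightarrow> n (c *\<^sub>R x) = \<bar>c\<bar> * n x"
  unfolding is_norm_def by blast

lemma is_norm_triangle: "is_norm n \<Longrightarrow> n (x + y) \<le> n x + n y"
  unfolding is_norm_def by blast

lemma is_norm_minus: "is_norm n \<Longrightarrow> n (- x) = n x"
  using is_norm_scaleR[of n "-1" x] by simp

lemma is_norm_minus_commute: "is_norm n \<Longrightarrow> n (x - y) = n (y - x)"
  using is_norm_minus[of n "y - x"] by simp

lemma convex_on_is_norm:
  assumes "is_norm n" shows "convex_on UNIV n"
proof
  fix t :: real and x y assume "0 < t" "t < 1"
  then show "n ((1 - t) *\<^sub>R x + t *\<^sub>R y) \<le> (1 - t) * n x + t * n y"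
    using is_norm_triangle[OF assms] is_norm_scaleR[OF assms] by (smt (verit))
qed simp

text \<open>In finite dimension every norm dominates a multiple of the Euclidean norm: it is convex,
  hence continuous, so it attains a positive minimum on the unit sphere.\<close>
lemma is_norm_ge_norm:
  fixes n :: "'a::euclidean_space \<Rightarrow> real"
  assumes n: "is_norm n"
  obtains c where "0 < c" "\<And>x. c * norm x \<le> n x"
proof -
  have "continuous_on (sphere 0 1) n"
    using convex_on_continuous[OF open_UNIV convex_on_is_norm[OF n]] continuous_on_subset by blast
  moreover have "sphere (0::'a) 1 \<noteq> {}"
    using vector_choose_size[of 1] by fastforce
  ultimately obtain m where m: "m \<in> sphere 0 1" "\<And>y. y \<in> sphere 0 1 \<Longrightarrow> n m \<le> n y"
    using continuous_attains_inf[OF compact_sphere] by blast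
  have "m \<noteq> 0"
    using m(1) by auto
  then have "0 < n m"
    using is_norm_nonneg[OF n] is_norm_eq_0_iff[OF n] by (metis less_eq_real_def)
  moreover have "n m * norm x \<le> n x" for x
  proof (cases "x = 0")
    case False
    then have "n m \<le> n ((1 / norm x) *\<^sub>R x)"
      by (intro m(2)) simp
    with False show ?thesis
      by (simp add: is_norm_scaleR[OF n] field_simps)
  qed (simp add: is_norm_zero[OF n])
  ultimately show thesis by (rule that)
qed

lemma bdd_above_op_norm_set:
  fixes A :: "'a::euclidean_space \<Rightarrow> 'b::euclidean_space"
  assumes nX: "is_norm nX" and nZ: "is_norm nZ" and A: "linear A"
  shows "bdd_above {inner (A x) z | x z. nX x \<le> 1 \<and> nZ z \<le> 1}"
proof -
  obtain cx where cx: "0 < cx" "\<And>x. cx * norm x \<le> nX x" using is_norm_ge_norm[OF nX] by blast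
  obtain cz where cz: "0 < cz" "\<And>z. cz * norm z \<le> nZ z" using is_norm_ge_norm[OF nZ] by blast
  obtain K where K: "\<And>x. norm (A x) \<le> norm x * K"
    using linear_conv_bounded_linear A bounded_linear.bounded by blast
  have "inner (A x) z \<le> 1 / cx * \<bar>K\<bar> * (1 / cz)" if "nX x \<le> 1" "nZ z \<le> 1" for x z
  proof -
    have "cx * norm x \<le> 1" "cz * norm z \<le> 1"
      using cx(2)[of x] cz(2)[of z] that by linarith+
    then have "norm x \<le> 1 / cx" "norm z \<le> 1 / cz"
      using cx(1) cz(1) by (simp_all add: field_simps)
    moreover have "inner (A x) z \<le> norm x * \<bar>K\<bar> * norm z"
      by (smt (verit) K[of x] norm_cauchy_schwarz mult_right_mono mult_left_mono norm_ge_zero)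
    ultimately show ?thesis
      by (smt (verit) mult_mono mult_nonneg_nonneg abs_ge_zero norm_ge_zero)
  qed
  then show ?thesis
    by (intro bdd_aboveI[where M = "1 / cx * \<bar>K\<bar> * (1 / cz)"]) blast
qed

lemma inner_le_op_norm:
  fixes A :: "'a::euclidean_space \<Rightarrow> 'b::euclidean_space"
  assumes nX: "is_norm nX" and nZ: "is_norm nZ" and A: "linear A"
  shows "inner (A x) z \<le> op_norm A nX nZ * nX x * nZ z"
proof (cases "x = 0 \<or> z = 0")
  case True
  then show ?thesis
    using is_norm_zero[OF nX] is_norm_zero[OF nZ] linear_0[OF A] by auto
next
  case False
  then have px: "0 < nX x" and pz: "0 < nZ z"
    using is_norm_nonneg is_norm_eq_0_iff nX nZ by (metis less_eq_real_def)+
  have "inner (A ((1 / nX x) *\<^sub>R x)) ((1 / nZ z) *\<^sub>R z) \<le> op_norm A nX nZ"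
    unfolding op_norm_def using px pz
    by (intro cSup_upper[OF _ bdd_above_op_norm_set[OF nX nZ A]])
       (fastforce simp: is_norm_scaleR[OF nX] is_norm_scaleR[OF nZ])
  with px pz show ?thesis
    by (simp add: linear_scale[OF A] field_simps)
qed

lemma op_norm_ge_neg_inner:
  fixes A :: "'a::euclidean_space \<Rightarrow> 'b::euclidean_space"
  assumes nX: "is_norm nX" and nZ: "is_norm nZ" and A: "linear A"
  shows "- (op_norm A nX nZ * nX x * nZ z) \<le> inner (A x) z"
  using inner_le_op_norm[OF nX nZ A, of "- x" z]
  by (simp add: linear_neg[OF A] is_norm_minus[OF nX])

text \<open>Strong convexity along the segment from a to b, compared with the supporting hyperplane
  at a, gives the bound with factor (1 - l)/2 for every l in (0,1); let l tend to 0.\<close>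
lemma bregman_ge_half_sq:
  fixes f :: "'a::real_inner \<Rightarrow> real"
  assumes sc: "strongly_convex_wrt n S f" and S: "convex S"
    and sub: "\<forall>x\<in>S. \<forall>y\<in>S. f y \<ge> f x + inner (f' x) (y - x)"
    and a: "a \<in> S" and b: "b \<in> S"
  shows "1/2 * (n (a - b))\<^sup>2 \<le> bregman f f' a b"
proof -
  let ?m = "(n (a - b))\<^sup>2"
  have "(1 - l) / 2 * ?m \<le> bregman f f' a b" if l: "0 < l" "l < 1" for l
  proof -
    have "(1 - l) *\<^sub>R a + l *\<^sub>R b \<in> S"
      using S a b l by (simp add: convex_def)
    with sub a have "f a + l * inner (f' a) (b - a) \<le> f ((1 - l) *\<^sub>R a + l *\<^sub>R b)"
      by (force simp: algebra_simps)
    also have "\<dots> \<le> (1 - l) * f a + l * f b - 1/2 * l * (1 - l) * ?m"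
      using sc a b l unfolding strongly_convex_wrt_def by simp
    finally have "l * ((1 - l) / 2 * ?m) \<le> l * bregman f f' a b"
      unfolding bregman_def by (simp add: algebra_simps)
    with l show ?thesis by simp
  qed
  then have "\<forall>\<^sub>F l in at_right 0. (1 - l) / 2 * ?m \<le> bregman f f' a b"
    using eventually_at_right_real[of 0 1] by (auto elim: eventually_mono)
  moreover have "((\<lambda>l. (1 - l) / 2 * ?m) \<longlongrightarrow> 1/2 * ?m) (at_right 0)"
    by (auto intro!: tendsto_eq_intros)
  ultimately show ?thesis
    by (intro tendsto_upperbound) auto
qed

lemma mult_le_half_sq_add:
  fixes a b q :: real
  assumes "0 < q"
  shows "a * b \<le> q / 2 * b\<^sup>2 + a\<^sup>2 / (2 * q)"
proof -
  have "2 * q * (a * b) \<le> q\<^sup>2 * b\<^sup>2 + a\<^sup>2"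
    using sum_squares_bound[of "q * b" a] by (simp add: power2_eq_square algebra_simps)
  with assms show ?thesis
    by (simp add: field_simps power2_eq_square)
qed

text \<open>After moving the adjoint across, the cross term alpha <A d, z1 - z0> is absorbed by the
  dual Bregman term through Young's inequality.\<close>
lemma coupling_term_ge:
  fixes A :: "'a::euclidean_space \<Rightarrow> 'b::euclidean_space"
  assumes nX: "is_norm nX" and nZ: "is_norm nZ" and A: "linear A"
    and q: "0 < q" and \<alpha>: "0 \<le> \<alpha>" and \<eta>: "0 \<le> \<eta>"
    and bz: "1/2 * (nZ (z0 - z1))\<^sup>2 \<le> bz" and bx: "1/2 * (nX (x0 - x1))\<^sup>2 \<le> bx"
  shows "inner (A (x1 - x0)) (z1 - z) - \<alpha> * inner (A d) (z0 - z) + \<eta> / 2 * (nX (x1 - x0))\<^sup>2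
           - \<alpha>\<^sup>2 * ((op_norm A nX nZ)\<^sup>2 / (2 * q)) * (nX d)\<^sup>2
         \<le> inner (adjoint A z1 - adjoint A z) (x1 - x0 - \<alpha> *\<^sub>R d) + q * bz + \<eta> * bx"
proof -
  let ?L = "op_norm A nX nZ"
  have split: "inner (adjoint A z1 - adjoint A z) (x1 - x0 - \<alpha> *\<^sub>R d)
      = inner (A (x1 - x0)) (z1 - z) - \<alpha> * inner (A d) (z0 - z) - \<alpha> * inner (A d) (z1 - z0)"
  proof -
    have adj: "inner (adjoint A w) v = inner (A v) w" for w v
      using adjoint_works[OF A, of v w] by (simp add: inner_commute)
    show ?thesis
      by (simp add: adj linear_diff[OF A] linear_scale[OF A] inner_diff_left inner_diff_right
          algebra_simps)
  qed
  have "\<alpha> * inner (A d) (z1 - z0) \<le> (\<alpha> * ?L * nX d) * nZ (z1 - z0)"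
    using mult_left_mono[OF inner_le_op_norm[OF nX nZ A] \<alpha>] by (simp add: mult.assoc)
  also have "\<dots> \<le> q / 2 * (nZ (z1 - z0))\<^sup>2 + \<alpha>\<^sup>2 * (?L\<^sup>2 / (2 * q)) * (nX d)\<^sup>2"
    using mult_le_half_sq_add[OF q, of "\<alpha> * ?L * nX d" "nZ (z1 - z0)"]
    by (simp add: power_mult_distrib)
  finally have cross: "\<alpha> * inner (A d) (z1 - z0)
      \<le> q / 2 * (nZ (z1 - z0))\<^sup>2 + \<alpha>\<^sup>2 * (?L\<^sup>2 / (2 * q)) * (nX d)\<^sup>2" .
  have "q / 2 * (nZ (z1 - z0))\<^sup>2 \<le> q * bz"
    using mult_left_mono[OF bz] q by (simp add: is_norm_minus_commute[OF nZ])
  moreover have "\<eta> / 2 * (nX (x1 - x0))\<^sup>2 \<le> \<eta> * bx"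
    using mult_left_mono[OF bx \<eta>] by (simp add: is_norm_minus_commute[OF nX])
  ultimately show ?thesis
    unfolding split using cross by linarith
qed

lemma sum_ge_telescoping:
  fixes f g :: "nat \<Rightarrow> 'a::ordered_ab_group_add"
  assumes "1 \<le> n" and "g 1 - r \<le> f 1" and "\<And>t. t \<in> {2..n} \<Longrightarrow> g t - g (t - 1) \<le> f t"
  shows "g n - r \<le> (\<Sum>t=1..n. f t)"
  using assms
proof (induction n)
  case (Suc n)
  show ?case
  proof (cases "n = 0")
    case False
    then have "g n - r \<le> (\<Sum>t=1..n. f t)" and "g (Suc n) - g n \<le> f (Suc n)"
      using Suc Suc.prems(3)[of "Suc n"] by auto
    then have "(g n - r) + (g (Suc n) - g n) \<le> (\<Sum>t=1..n. f t) + f (Suc n)"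
      by (rule add_mono)
    then show ?thesis
      by (simp add: algebra_simps)
  qed (use Suc in simp)
qed simp

text \<open>Within block k the sum telescopes down to the end value P k (T k) + eta/2 s k (T k) minus
  a start penalty; the hypotheses across bound the weighted start penalty of block k by the
  weighted end value of block k - 1, so the weighted block sums telescope as well.\<close>
lemma nested_sum_ge_telescoping:
  fixes \<tau> P s \<eta> \<alpha> c :: "nat \<Rightarrow> nat \<Rightarrow> real" and w :: "nat \<Rightarrow> real" and T :: "nat \<Rightarrow> nat"
  assumes N: "1 \<le> N" and T: "\<forall>k\<in>{1..N}. 1 \<le> T k" and w: "\<forall>k\<in>{1..N}. 0 < w k"
    and s: "\<forall>k t. 0 \<le> s k t"
    and bound: "\<forall>k\<in>{1..N}. \<forall>t\<in>{1..T k}.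
      P k t - \<alpha> k t * P k (t-1) + \<eta> k t / 2 * s k t - (\<alpha> k t)\<^sup>2 * c k t * s k (t-1) \<le> \<tau> k t"
    and within: "\<forall>k\<in>{1..N}. \<forall>t\<in>{2..T k}. \<alpha> k t = 1 \<and> c k t \<le> \<eta> k (t-1) / 2"
    and start: "P 1 0 = 0" "s 1 0 = 0"
    and across: "\<forall>k\<in>{2..N}. P k 0 = P (k-1) (T (k-1)) \<and> s k 0 = s (k-1) (T (k-1))
      \<and> w k * \<alpha> k 1 = w (k-1) \<and> 0 \<le> \<alpha> k 1 \<and> \<alpha> k 1 * c k 1 \<le> \<eta> (k-1) (T (k-1)) / 2"
  shows "w N * (P N (T N) + \<eta> N (T N) / 2 * s N (T N))
    \<le> (\<Sum>k=1..N. w k * (\<Sum>t=1..T k. \<tau> k t))"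
proof -
  define F where "F k t = P k t + \<eta> k t / 2 * s k t" for k t
  define R where "R k = \<alpha> k 1 * P k 0 + (\<alpha> k 1)\<^sup>2 * c k 1 * s k 0" for k
  have block: "F k (T k) - R k \<le> (\<Sum>t=1..T k. \<tau> k t)" if k: "k \<in> {1..N}" for k
  proof (rule sum_ge_telescoping)
    show T1: "1 \<le> T k"
      using T k by blast
    show "F k 1 - R k \<le> \<tau> k 1"
      using bspec[OF bspec[OF bound k], of 1] T1 unfolding F_def R_def by simp
  next
    fix t assume t: "t \<in> {2..T k}"
    then have \<alpha>1: "\<alpha> k t = 1" and "c k t \<le> \<eta> k (t-1) / 2"
      using within k by auto
    then have "c k t * s k (t-1) \<le> \<eta> k (t-1) / 2 * s k (t-1)"
      using s by (intro mult_right_mono) auto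
    moreover have "P k t - P k (t-1) + \<eta> k t / 2 * s k t - c k t * s k (t-1) \<le> \<tau> k t"
      using bspec[OF bspec[OF bound k], of t] t \<alpha>1 by simp
    ultimately show "F k t - F k (t-1) \<le> \<tau> k t"
      unfolding F_def by linarith
  qed
  have "w N * F N (T N) - 0 \<le> (\<Sum>k=1..N. w k * (\<Sum>t=1..T k. \<tau> k t))"
  proof (rule sum_ge_telescoping)
    show "1 \<le> N" by (rule N)
    have "F 1 (T 1) \<le> (\<Sum>t=1..T 1. \<tau> 1 t)"
      using block[of 1] N start unfolding R_def by simp
    then show "w 1 * F 1 (T 1) - 0 \<le> w 1 * (\<Sum>t=1..T 1. \<tau> 1 t)"
      using bspec[OF w, of 1] N by (simp add: mult_left_mono)
  next
    fix k assume k: "k \<in> {2..N}"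
    then have k1: "k - 1 \<in> {1..N}" "k \<in> {1..N}"
      by auto
    then have w_pos: "0 < w (k-1)" "0 < w k"
      using w by blast+
    have "\<alpha> k 1 * c k 1 * s k 0 \<le> \<eta> (k-1) (T (k-1)) / 2 * s k 0"
      using across k s by (intro mult_right_mono) auto
    then have cs: "w (k-1) * (\<alpha> k 1 * c k 1 * s k 0) \<le> w (k-1) * (\<eta> (k-1) (T (k-1)) / 2 * s k 0)"
      using w_pos by (intro mult_left_mono) auto
    have "w k * R k = (w k * \<alpha> k 1) * P k 0 + (w k * \<alpha> k 1) * (\<alpha> k 1 * c k 1 * s k 0)"
      unfolding R_def by (simp add: power2_eq_square algebra_simps)
    also have "\<dots> = w (k-1) * P k 0 + w (k-1) * (\<alpha> k 1 * c k 1 * s k 0)"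
      using across k by simp
    also have "\<dots> \<le> w (k-1) * F (k-1) (T (k-1))"
      using cs across k unfolding F_def by (simp add: algebra_simps)
    finally have "w k * R k \<le> w (k-1) * F (k-1) (T (k-1))" .
    moreover have "w k * (F k (T k) - R k) \<le> w k * (\<Sum>t=1..T k. \<tau> k t)"
      using block[OF k1(2)] w_pos by (intro mult_left_mono) auto
    ultimately show "w k * F k (T k) - w (k-1) * F (k-1) (T (k-1)) \<le> w k * (\<Sum>t=1..T k. \<tau> k t)"
      by (simp add: right_diff_distrib)
  qed
  then show ?thesis
    unfolding F_def by simp
qed

lemma warm_started_iterate_mem:
  fixes x :: "nat \<Rightarrow> nat \<Rightarrow> 'a" and T :: "nat \<Rightarrow> nat" and N k t :: nat
  assumes "x 1 0 \<in> S" and "\<forall>k\<in>{2..N}. x k 0 = x (k-1) (T (k-1))"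
    and "\<forall>k\<in>{1..N}. \<forall>t\<in>{1..T k}. x k t \<in> S" and "\<forall>k\<in>{1..N}. 1 \<le> T k"
    and "k \<in> {1..N}" and "t \<le> T k"
  shows "x k t \<in> S"
proof (cases "t = 0")
  case True
  show ?thesis
  proof (cases "k = 1")
    case False
    then have "k - 1 \<in> {1..N}" "k \<in> {2..N}"
      using assms(5) by auto
    then show ?thesis
      using assms(2-4) True by fastforce
  qed (use assms(1) True in simp)
qed (use assms in auto)

text \<open>Only the feasibility of the iterates enters the bound, not the optimality conditions of
  the two proximal updates.\<close>
locale pds_spp =
  fixes X :: "'a::euclidean_space set" and Z :: "'b::euclidean_space set"
    and nX :: "'a \<Rightarrow> real" and nZ :: "'b \<Rightarrow> real" and A :: "'a \<Rightarrow> 'b"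
    and \<nu> :: "'a \<Rightarrow> real" and \<nu>' :: "'a \<Rightarrow> 'a" and \<zeta> :: "'b \<Rightarrow> real" and \<zeta>' :: "'b \<Rightarrow> 'b"
    and N :: nat and T :: "nat \<Rightarrow> nat" and \<beta> :: "nat \<Rightarrow> real"
    and q \<eta> \<alpha> :: "nat \<Rightarrow> nat \<Rightarrow> real"
    and x0 :: 'a and x u :: "nat \<Rightarrow> nat \<Rightarrow> 'a" and zz :: "nat \<Rightarrow> nat \<Rightarrow> 'b"
  assumes convex_X: "convex X" and convex_Z: "convex Z"
    and nX: "is_norm nX" and nZ: "is_norm nZ" and A: "linear A"
    and \<nu>: "strongly_convex_wrt nX X \<nu>"
    and \<nu>': "\<forall>xh\<in>X. \<forall>y\<in>X. \<nu> y \<ge> \<nu> xh + inner (\<nu>' xh) (y - xh)"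
    and \<zeta>: "strongly_convex_wrt nZ Z \<zeta>"
    and \<zeta>': "\<forall>zh\<in>Z. \<forall>y\<in>Z. \<zeta> y \<ge> \<zeta> zh + inner (\<zeta>' zh) (y - zh)"
    and N: "1 \<le> N" and T: "\<forall>k\<in>{1..N}. 1 \<le> T k" and \<beta>: "\<forall>k\<in>{1..N}. 0 < \<beta> k"
    and pos: "\<forall>k\<in>{1..N}. \<forall>t\<in>{1..T k}. 0 < q k t \<and> 0 < \<eta> k t \<and> 0 \<le> \<alpha> k t"
    and x_start: "x 1 0 = x0" "x0 \<in> X" and zz_start: "zz 1 0 \<in> Z"
    and warm_start: "\<forall>k\<in>{2..N}. x k 0 = x (k-1) (T (k-1)) \<and> zz k 0 = zz (k-1) (T (k-1))"
    and u_first: "\<forall>k\<in>{1..N}.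
      u k 1 = x k 0 + \<alpha> k 1 *\<^sub>R (x k 0 - (if k = 1 then x0 else x (k-1) (T (k-1) - 1)))"
    and u_next: "\<forall>k\<in>{1..N}. \<forall>t\<in>{2..T k}. u k t = x k (t-1) + \<alpha> k t *\<^sub>R (x k (t-1) - x k (t-2))"
    and x_mem: "\<forall>k\<in>{1..N}. \<forall>t\<in>{1..T k}. x k t \<in> X"
    and zz_mem: "\<forall>k\<in>{1..N}. \<forall>t\<in>{1..T k}. zz k t \<in> Z"
    and \<alpha>_eq_1: "\<forall>k\<in>{1..N}. \<forall>t\<in>{2..T k}. \<alpha> k t = 1"
    and step_size: "\<forall>k\<in>{1..N}. \<forall>t\<in>{2..T k}. (op_norm A nX nZ)\<^sup>2 \<le> \<eta> k (t-1) * q k t"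
    and \<beta>_link: "\<forall>k\<in>{2..N}. \<beta> k * real (T (k-1)) * \<alpha> k 1 = \<beta> (k-1) * real (T k)"
    and step_size_first: "\<forall>k\<in>{2..N}. \<alpha> k 1 * (op_norm A nX nZ)\<^sup>2 \<le> \<eta> (k-1) (T (k-1)) * q k 1"
begin

text \<open>x_prev k t is the paper's x_k^(t-1), including x_k^(-1) = x_(k-1)^(T_(k-1) - 1) and
  x_1^(-1) = x_0.\<close>
definition x_prev :: "nat \<Rightarrow> nat \<Rightarrow> 'a" where
  "x_prev k t = (if t = 0 then (if k = 1 then x0 else x (k-1) (T (k-1) - 1)) else x k (t-1))"

definition x_step :: "nat \<Rightarrow> nat \<Rightarrow> 'a" where
  "x_step k t = x k t - x_prev k t"

definition coupling :: "'b \<Rightarrow> nat \<Rightarrow> nat \<Rightarrow> real" where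
  "coupling z k t = inner (A (x_step k t)) (zz k t - z)"

definition gap_term :: "'b \<Rightarrow> nat \<Rightarrow> nat \<Rightarrow> real" where
  "gap_term z k t = inner (adjoint A (zz k t) - adjoint A z) (x k t - u k t)
    + q k t * bregman \<zeta> \<zeta>' (zz k (t-1)) (zz k t) + \<eta> k t * bregman \<nu> \<nu>' (x k (t-1)) (x k t)"

lemma x_step_eq: "1 \<le> t \<Longrightarrow> x_step k t = x k t - x k (t-1)"
  by (simp add: x_step_def x_prev_def)

lemma x_step_first: "x_step 1 0 = 0"
  using x_start by (simp add: x_step_def x_prev_def)

lemma x_step_warm_start:
  assumes "k \<in> {2..N}" shows "x_step k 0 = x_step (k-1) (T (k-1))"
proof -
  have "k - 1 \<in> {1..N}"
    using assms by auto
  with T have "1 \<le> T (k-1)"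
    by blast
  then show ?thesis
    using warm_start assms by (auto simp: x_step_def x_prev_def)
qed

lemma u_eq:
  assumes k: "k \<in> {1..N}" and t: "t \<in> {1..T k}"
  shows "u k t = x k (t-1) + \<alpha> k t *\<^sub>R x_step k (t-1)"
proof (cases "t = 1")
  case True
  then show ?thesis
    using u_first k by (simp add: x_step_def x_prev_def)
next
  case False
  then have "t \<in> {2..T k}" "t - 1 - 1 = t - 2"
    using t by auto
  then show ?thesis
    using u_next k by (simp add: x_step_def x_prev_def)
qed

lemma x_mem_all:
  assumes "k \<in> {1..N}" "t \<le> T k" shows "x k t \<in> X"
  by (rule warm_started_iterate_mem[where N = N and T = T])
    (use x_start warm_start x_mem T assms in auto)

lemma zz_mem_all:
  assumes "k \<in> {1..N}" "t \<le> T k" shows "zz k t \<in> Z"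
  by (rule warm_started_iterate_mem[where N = N and T = T])
    (use zz_start warm_start zz_mem T assms in auto)

lemma gap_term_ge:
  assumes k: "k \<in> {1..N}" and t: "t \<in> {1..T k}"
  shows "coupling z k t - \<alpha> k t * coupling z k (t-1) + \<eta> k t / 2 * (nX (x_step k t))\<^sup>2
      - (\<alpha> k t)\<^sup>2 * ((op_norm A nX nZ)\<^sup>2 / (2 * q k t)) * (nX (x_step k (t-1)))\<^sup>2
    \<le> gap_term z k t"
proof -
  have "0 < q k t \<and> 0 < \<eta> k t \<and> 0 \<le> \<alpha> k t"
    using bspec[OF bspec[OF pos k] t] .
  then have q: "0 < q k t" and \<alpha>: "0 \<le> \<alpha> k t" and \<eta>: "0 \<le> \<eta> k t"
    by auto
  have "zz k (t-1) \<in> Z" "zz k t \<in> Z" "x k (t-1) \<in> X" "x k t \<in> X"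
    using zz_mem_all[OF k] x_mem_all[OF k] t by auto
  then have "1/2 * (nZ (zz k (t-1) - zz k t))\<^sup>2 \<le> bregman \<zeta> \<zeta>' (zz k (t-1)) (zz k t)"
    and "1/2 * (nX (x k (t-1) - x k t))\<^sup>2 \<le> bregman \<nu> \<nu>' (x k (t-1)) (x k t)"
    using bregman_ge_half_sq[OF \<zeta> convex_Z \<zeta>'] bregman_ge_half_sq[OF \<nu> convex_X \<nu>'] by auto
  from coupling_term_ge[OF nX nZ A q \<alpha> \<eta> this, where z = z and d = "x_step k (t-1)"]
  show ?thesis
    using t unfolding coupling_def gap_term_def u_eq[OF k t] by (simp add: x_step_eq algebra_simps)
qed

lemma gap_lower_bound:
  "- (\<beta> N / real (T N)) * op_norm A nX nZ * nZ (zz N (T N) - z) * nX (x N (T N) - x N (T N - 1))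
     + \<beta> N * \<eta> N (T N) / (2 * real (T N)) * (nX (x N (T N - 1) - x N (T N)))\<^sup>2
   \<le> (\<Sum>k=1..N. \<beta> k / real (T k) * (\<Sum>t=1..T k. gap_term z k t))"
proof -
  let ?L = "op_norm A nX nZ"
  define w where "w k = \<beta> k / real (T k)" for k
  have "N \<in> {1..N}"
    using N by simp
  then have TN: "1 \<le> T N" and "0 < \<beta> N"
    using T \<beta> by blast+
  then have "0 \<le> w N"
    unfolding w_def by simp
  from mult_left_mono[OF op_norm_ge_neg_inner[OF nX nZ A] this]
  have "w N * - (?L * nX (x_step N (T N)) * nZ (zz N (T N) - z)) \<le> w N * coupling z N (T N)"
    unfolding coupling_def .
  moreover have "nX (x N (T N) - x N (T N - 1)) = nX (x_step N (T N))"
    "nX (x N (T N - 1) - x N (T N)) = nX (x_step N (T N))"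
    using TN x_step_eq[OF TN] is_norm_minus_commute[OF nX] by auto
  ultimately have "- (\<beta> N / real (T N)) * ?L * nZ (zz N (T N) - z) * nX (x N (T N) - x N (T N - 1))
      + \<beta> N * \<eta> N (T N) / (2 * real (T N)) * (nX (x N (T N - 1) - x N (T N)))\<^sup>2
      \<le> w N * (coupling z N (T N) + \<eta> N (T N) / 2 * (nX (x_step N (T N)))\<^sup>2)"
    unfolding w_def by (simp add: algebra_simps)
  also have "\<dots> \<le> (\<Sum>k=1..N. w k * (\<Sum>t=1..T k. gap_term z k t))"
  proof (rule nested_sum_ge_telescoping[where P = "coupling z" and s = "\<lambda>k t. (nX (x_step k t))\<^sup>2"
        and c = "\<lambda>k t. ?L\<^sup>2 / (2 * q k t)"])
    show "\<forall>k\<in>{1..N}. 0 < w k"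
      using T \<beta> unfolding w_def by (auto intro!: divide_pos_pos)
    show "\<forall>k\<in>{1..N}. \<forall>t\<in>{2..T k}. \<alpha> k t = 1 \<and> ?L\<^sup>2 / (2 * q k t) \<le> \<eta> k (t-1) / 2"
      using \<alpha>_eq_1 step_size pos by (force simp: field_simps)
    show "coupling z 1 0 = 0" "(nX (x_step 1 0))\<^sup>2 = 0"
      using x_step_first by (simp_all add: coupling_def linear_0[OF A] is_norm_zero[OF nX])
    show "\<forall>k\<in>{2..N}. coupling z k 0 = coupling z (k-1) (T (k-1))
      \<and> (nX (x_step k 0))\<^sup>2 = (nX (x_step (k-1) (T (k-1))))\<^sup>2
      \<and> w k * \<alpha> k 1 = w (k-1) \<and> 0 \<le> \<alpha> k 1 \<and> \<alpha> k 1 * (?L\<^sup>2 / (2 * q k 1)) \<le> \<eta> (k-1) (T (k-1)) / 2"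
    proof (intro ballI conjI)
      fix k assume k: "k \<in> {2..N}"
      then have k1: "k - 1 \<in> {1..N}" "k \<in> {1..N}"
        by auto
      then have T: "1 \<le> T (k-1)" "1 \<le> T k"
        using T by blast+
      then show "0 \<le> \<alpha> k 1"
        using pos k1 by auto
      show "coupling z k 0 = coupling z (k-1) (T (k-1))"
        using k warm_start x_step_warm_start[OF k] unfolding coupling_def by auto
      show "(nX (x_step k 0))\<^sup>2 = (nX (x_step (k-1) (T (k-1))))\<^sup>2"
        using x_step_warm_start[OF k] by simp
      show "w k * \<alpha> k 1 = w (k-1)"
        using k \<beta>_link T unfolding w_def by (auto simp: field_simps)
      have "0 < q k 1"
        using pos k1 T by auto
      then show "\<alpha> k 1 * (?L\<^sup>2 / (2 * q k 1)) \<le> \<eta> (k-1) (T (k-1)) / 2"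
        using k step_size_first by (auto simp: field_simps)
    qed
  qed (use N T gap_term_ge in auto)
  finally show ?thesis
    unfolding w_def .
qed

end

theorem lemma5p4:
  fixes X :: "'a::euclidean_space set" and Z :: "'b::euclidean_space set"
    and nX :: "'a \<Rightarrow> real" and nZ :: "'b \<Rightarrow> real"
    and A :: "'a \<Rightarrow> 'b" and h :: "'b \<Rightarrow> real" and \<mu> :: real
    and \<nu> :: "'a \<Rightarrow> real" and \<nu>' :: "'a \<Rightarrow> 'a"
    and \<zeta> :: "'b \<Rightarrow> real" and \<zeta>' :: "'b \<Rightarrow> 'b"
    and N :: nat and T :: "nat \<Rightarrow> nat"
    and \<beta> p :: "nat \<Rightarrow> real" and q \<eta> \<alpha> :: "nat \<Rightarrow> nat \<Rightarrow> real"
    and v :: "nat \<Rightarrow> 'a"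
    and x0 :: 'a and z0 :: 'b
    and x u :: "nat \<Rightarrow> nat \<Rightarrow> 'a" and zz :: "nat \<Rightarrow> nat \<Rightarrow> 'b"
    and z :: 'b
  assumes X: "closed X" "convex X" and Zs: "closed Z" "convex Z"
    and nX: "is_norm nX" and nZ: "is_norm nZ"
    and A: "linear A"
    and h: "convex_on Z h"
    and mu: "\<mu> \<ge> 0"
    and nu: "strongly_convex_wrt nX X \<nu>"
    and nu': "\<forall>xh\<in>X. \<forall>y\<in>X. \<nu> y \<ge> \<nu> xh + inner (\<nu>' xh) (y - xh)"
    and zeta: "strongly_convex_wrt nZ Z \<zeta>"
    and zeta': "\<forall>zh\<in>Z. \<forall>y\<in>Z. \<zeta> y \<ge> \<zeta> zh + inner (\<zeta>' zh) (y - zh)"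
    and N: "N \<ge> 1"
    and T: "\<forall>k\<in>{1..N}. T k \<ge> 1"
    and pos: "\<forall>k\<in>{1..N}. \<beta> k > 0 \<and> p k > 0"
    and pos2: "\<forall>k\<in>{1..N}. \<forall>t\<in>{1..T k}. q k t > 0 \<and> \<eta> k t > 0 \<and> \<alpha> k t \<ge> 0"
    and x0: "x0 \<in> X" and z0: "z0 \<in> Z"
    and init1: "x 1 0 = x0" "zz 1 0 = z0"
    and initk: "\<forall>k\<in>{2..N}. x k 0 = x (k-1) (T (k-1)) \<and> zz k 0 = zz (k-1) (T (k-1))"
    and u1: "\<forall>k\<in>{1..N}. u k 1 = x k 0 + \<alpha> k 1 *\<^sub>R (x k 0 - (if k = 1 then x0 else x (k-1) (T (k-1) - 1)))"
    and ut: "\<forall>k\<in>{1..N}. \<forall>t\<in>{2..T k}. u k t = x k (t-1) + \<alpha> k t *\<^sub>R (x k (t-1) - x k (t-2))"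
    and zupd: "\<forall>k\<in>{1..N}. \<forall>t\<in>{1..T k}. zz k t \<in> Z \<and> (\<forall>w\<in>Z.
        h (zz k t) + inner (- A (u k t)) (zz k t) + q k t * bregman \<zeta> \<zeta>' (zz k (t-1)) (zz k t)
        \<le> h w + inner (- A (u k t)) w + q k t * bregman \<zeta> \<zeta>' (zz k (t-1)) w)"
    and xupd: "\<forall>k\<in>{1..N}. \<forall>t\<in>{1..T k}. x k t \<in> X \<and> (\<forall>y\<in>X.
        \<mu> * \<nu> (x k t) + inner (v k + adjoint A (zz k t)) (x k t) + \<eta> k t * bregman \<nu> \<nu>' (x k (t-1)) (x k t)
          + p k * bregman \<nu> \<nu>' (if k = 1 then x0 else x (k-1) (T (k-1))) (x k t)
        \<le> \<mu> * \<nu> y + inner (v k + adjoint A (zz k t)) y + \<eta> k t * bregman \<nu> \<nu>' (x k (t-1)) y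
          + p k * bregman \<nu> \<nu>' (if k = 1 then x0 else x (k-1) (T (k-1))) y)"
    and alpha1: "\<forall>k\<in>{1..N}. \<forall>t\<in>{2..T k}. \<alpha> k t = 1"
    and stepA: "\<forall>k\<in>{1..N}. \<forall>t\<in>{2..T k}. (op_norm A nX nZ)\<^sup>2 \<le> \<eta> k (t-1) * q k t"
    and beta: "\<forall>k\<in>{2..N}. \<beta> k * real (T (k-1)) * \<alpha> k 1 = \<beta> (k-1) * real (T k)"
    and stepA1: "\<forall>k\<in>{2..N}. \<alpha> k 1 * (op_norm A nX nZ)\<^sup>2 \<le> \<eta> (k-1) (T (k-1)) * q k 1"
    and z: "z \<in> Z"
  shows "(\<Sum>k=1..N. \<beta> k / real (T k) * (\<Sum>t=1..T k.
            inner (adjoint A (zz k t) - adjoint A z) (x k t - u k t)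
            + q k t * bregman \<zeta> \<zeta>' (zz k (t-1)) (zz k t)
            + \<eta> k t * bregman \<nu> \<nu>' (x k (t-1)) (x k t)))
       \<ge> - (\<beta> N / real (T N)) * op_norm A nX nZ * nZ (zz N (T N) - z) * nX (x N (T N) - x N (T N - 1))
         + \<beta> N * \<eta> N (T N) / (2 * real (T N)) * (nX (x N (T N - 1) - x N (T N)))\<^sup>2"
proof -
  have reduced: "\<forall>k\<in>{1..N}. \<forall>t\<in>{1..T k}. x k t \<in> X" "\<forall>k\<in>{1..N}. \<forall>t\<in>{1..T k}. zz k t \<in> Z"
    "\<forall>k\<in>{1..N}. 0 < \<beta> k" "zz 1 0 \<in> Z"
    using xupd zupd pos init1 z0 by simp_all
  interpret pds_spp X Z nX nZ A \<nu> \<nu>' \<zeta> \<zeta>' N T \<beta> q \<eta> \<alpha> x0 x u zz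
    by (rule pds_spp.intro) (rule assms reduced)+
  show ?thesis
    using gap_lower_bound[of z] unfolding gap_term_def .
qed

end
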